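(* Let $K,F,Z,S$ be positive integers and let $\mathbf{P}=(p_{j,k})_{0\le j<F,\,0\le k<K}$ be a $(K,F,Z,S)$ placement delivery array. Suppose there is an integer $Z'$ such that every column of $\mathbf{P}$ contains exactly $Z'$ useless stars. Then, for any number $N$ of files, there exists an $(F-Z')$-division $(K,M,N)$ coded caching scheme with memory ratio $\frac{M}{N}=\frac{Z-Z'}{F-Z'}$ and transmission rate $R=\frac{S}{F-Z'}$. Moreover, its delivery consists of $S$ transmissions indexed by $s\in[0,S)$, each of the size of one packet, and the coded gain at each time slot $s$ is the same as in the scheme obtained from $\mathbf{P}$ by the standard PDA scheme; that is, transmission $s$ is the XOR of coded packets each of which is needed by a different user, and it simultaneously serves exactly as many users as the number of occurrences of the integer $s$ in $\mathbf{P}$.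
   Context: Notation: $[0,m)=\{0,1,\dots,m-1\}$. Placement delivery array (PDA): for positive integers $K,F,Z,S$, an $F\times K$ array $\mathbf{P}=(p_{j,k})$, $0\le j<F$, $0\le k<K$, whose entries are either a special symbol $*$ or integers in $[0,S)$, is a $(K,F,Z,S)$ PDA if (C1) the symbol $*$ appears exactly $Z$ times in each column; (C2) each integer in $[0,S)$ occurs at least once in the array; (C3) for any two distinct entries $p_{j_1,k_1}$ and $p_{j_2,k_2}$, $p_{j_1,k_1}=p_{j_2,k_2}=s$ with $s$ an integer only if $j_1\ne j_2$, $k_1\ne k_2$ and $p_{j_1,k_2}=p_{j_2,k_1}=*$. Useful/useless stars: a star entry $p_{j,k}=*$ is useful if there exist an integer $s\in[0,S)$, a column $k'$ with $p_{j,k'}=s$ and a row $j'$ with $p_{j',k}=s$ (i.e. the star lies in the square subarray formed by the rows and columns of the occurrences of $s$); otherwise it is useless. Standard PDA scheme: each file is split into $F$ packets $W_{n,j}$, $j\in[0,F)$; user $k$ caches $W_{n,j}$ for all $n$ and all $j$ with $p_{j,k}=*$; for demand vector $\mathbf{d}$, at time slot $s\in[0,S)$ the server sends $\bigoplus_{p_{j,k}=s}W_{d_k,j}$. The number of occurrences of $s$ in $\mathbf{P}$ is called the coded gain at time slot $s$. Coded caching model: a server holds $N$ files $W_0,\dots,W_{N-1}$ of equal size, connected by a shared error-free broadcast link to $K$ users, each with a cache of size $M$ files. An $F$-division $(K,M,N)$ coded caching scheme consists of: (placement) each file is split into $F$ equal-size packets and each user $k$ stores content $\mathcal{Z}_k$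 (packets or coded combinations of packets, possibly over a finite field) of total size at most $M$ files, without knowledge of the demands; (delivery) for each demand vector $\mathbf{d}=(d_0,\dots,d_{K-1})\in[0,N)^K$ (user $k$ requests $W_{d_k}$), the server broadcasts a signal of size $R_{\mathbf{d}}$ files such that every user $k$ can recover $W_{d_k}$ from the signal and $\mathcal{Z}_k$. The memory ratio is $M/N$ and the transmission rate is $R=\max_{\mathbf{d}}R_{\mathbf{d}}$. *)

theory Defs
  imports Complex_Main
begin

text \<open>A PDA is an F x K array; entry P j k (row j < F, column k < K) is
  None for the star symbol and Some s for the integer s.\<close>

definition is_PDA :: "nat \<Rightarrow> nat \<Rightarrow> nat \<Rightarrow> nat \<Rightarrow> (nat \<Rightarrow> nat \<Rightarrow> nat option) \<Rightarrow> bool" where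
  "is_PDA K F Z S P \<longleftrightarrow>
     (\<forall>j<F. \<forall>k<K. \<forall>s. P j k = Some s \<longrightarrow> s < S) \<and>
     (\<forall>k<K. card {j. j < F \<and> P j k = None} = Z) \<and>
     (\<forall>s<S. \<exists>j<F. \<exists>k<K. P j k = Some s) \<and>
     (\<forall>j1<F. \<forall>k1<K. \<forall>j2<F. \<forall>k2<K. \<forall>s.
        (j1, k1) \<noteq> (j2, k2) \<and> P j1 k1 = Some s \<and> P j2 k2 = Some s \<longrightarrow>
        j1 \<noteq> j2 \<and> k1 \<noteq> k2 \<and> P j1 k2 = None \<and> P j2 k1 = None)"

definition useful_star :: "nat \<Rightarrow> nat \<Rightarrow> nat \<Rightarrow> (nat \<Rightarrow> nat \<Rightarrow> nat option) \<Rightarrow> nat \<Rightarrow> nat \<Rightarrow> bool" where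
  "useful_star K F S P j k \<longleftrightarrow> P j k = None \<and>
     (\<exists>s<S. (\<exists>k'<K. P j k' = Some s) \<and> (\<exists>j'<F. P j' k = Some s))"

definition useless_star :: "nat \<Rightarrow> nat \<Rightarrow> nat \<Rightarrow> (nat \<Rightarrow> nat \<Rightarrow> nat option) \<Rightarrow> nat \<Rightarrow> nat \<Rightarrow> bool" where
  "useless_star K F S P j k \<longleftrightarrow> P j k = None \<and> \<not> useful_star K F S P j k"

text \<open>Number of occurrences of the integer s in P (the coded gain at time slot s
  in the standard PDA scheme).\<close>
definition occurrences :: "nat \<Rightarrow> nat \<Rightarrow> (nat \<Rightarrow> nat \<Rightarrow> nat option) \<Rightarrow> nat \<Rightarrow> nat" where
  "occurrences K F P s = card {(j, k). j < F \<and> k < K \<and> P j k = Some s}"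

text \<open>A packet consists of B bits (bits with index >= B are ignored, see trunc).
  A file (type pfile) is a sequence of packets (packet index => packet); only packets with
  index < Fd (the division number) belong to the file. A library is a sequence of
  files; only files with index < N belong to it.\<close>

type_synonym packet = "nat \<Rightarrow> bool"
type_synonym pfile = "nat \<Rightarrow> packet"
type_synonym library = "nat \<Rightarrow> pfile"

definition trunc :: "nat \<Rightarrow> packet \<Rightarrow> packet" where
  "trunc B p = (\<lambda>b. if b < B then p b else False)"

definition xor_sum :: "nat set \<Rightarrow> (nat \<Rightarrow> packet) \<Rightarrow> packet" where
  "xor_sum U f = (\<lambda>b. odd (card {k \<in> U. f k b}))"

definition file_eq :: "nat \<Rightarrow> nat \<Rightarrow> pfile \<Rightarrow> pfile \<Rightarrow> bool" where
  "file_eq Fd B w w' \<longleftrightarrow> (\<forall>j<Fd. \<forall>b<B. w j b = w' j b)"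

text \<open>The cache of a user is a list of stored packet-sized items; each item is a
  (coded) packet computed from one file n, i.e. a pair (n, g) with g a function
  from files to packets.\<close>
type_synonym cache_item = "nat \<times> (pfile \<Rightarrow> packet)"

definition cache_view :: "nat \<Rightarrow> cache_item list \<Rightarrow> library \<Rightarrow> packet list" where
  "cache_view B Zk W = map (\<lambda>(n, g). trunc B (g (W n))) Zk"

text \<open>Delivery: for demand vector d, tr d s W (s < S) is the s-th transmitted
  packet (B bits); the whole signal has size S packets = S / Fd files.\<close>
definition signal_view :: "nat \<Rightarrow> nat \<Rightarrow> (nat \<Rightarrow> library \<Rightarrow> packet) \<Rightarrow> library \<Rightarrow> packet list" where
  "signal_view B S t W = map (\<lambda>s. trunc B (t s W)) [0..<S]"

definition valid_demand :: "nat \<Rightarrow> nat \<Rightarrow> (nat \<Rightarrow> nat) \<Rightarrow> bool" where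
  "valid_demand K N d \<longleftrightarrow> (\<forall>k<K. d k < N)"

text \<open>An Fd-division (K,M,N) coded caching scheme with packets of B bits, whose
  delivery for every demand consists of S packet-sized transmissions (hence rate
  R = S / Fd). Every user k recovers its requested file from its cache and the
  signal: any two libraries giving the same cache content and the same signal
  agree on the requested file.\<close>
definition coded_caching_scheme ::
  "nat \<Rightarrow> real \<Rightarrow> nat \<Rightarrow> nat \<Rightarrow> nat \<Rightarrow> nat \<Rightarrow> (nat \<Rightarrow> cache_item list)
     \<Rightarrow> ((nat \<Rightarrow> nat) \<Rightarrow> nat \<Rightarrow> library \<Rightarrow> packet) \<Rightarrow> bool" where
  "coded_caching_scheme K M N Fd B S cache tr \<longleftrightarrow>
     0 < Fd \<and> 0 < B \<and>
     (\<forall>k<K. \<forall>(n, g) \<in> set (cache k). n < N) \<and>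
     (\<forall>k<K. real (length (cache k)) \<le> M * real Fd) \<and>
     (\<forall>d. valid_demand K N d \<longrightarrow> (\<forall>k<K. \<forall>W W'.
        cache_view B (cache k) W = cache_view B (cache k) W' \<and>
        signal_view B S (tr d) W = signal_view B S (tr d) W'
        \<longrightarrow> file_eq Fd B (W (d k)) (W' (d k))))"

definition transmission_rate :: "nat \<Rightarrow> nat \<Rightarrow> real" where
  "transmission_rate Fd S = real S / real Fd"

text \<open>XOR structure of the delivery: transmission s is the XOR of coded packets
  c k (W (d k)) (a packet computed from the file requested by user k), one for each
  user k of a set U of users with card U = gain s; each such coded packet is needed
  by its user (not determined by the user's cache) while every other user of U can
  compute it from its own cache.\<close>
definition xor_delivery ::
  "nat \<Rightarrow> nat \<Rightarrow> nat \<Rightarrow> nat \<Rightarrow> (nat \<Rightarrow> cache_item list)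
     \<Rightarrow> ((nat \<Rightarrow> nat) \<Rightarrow> nat \<Rightarrow> library \<Rightarrow> packet) \<Rightarrow> (nat \<Rightarrow> nat) \<Rightarrow> bool" where
  "xor_delivery K N B S cache tr gain \<longleftrightarrow>
     (\<forall>d. valid_demand K N d \<longrightarrow> (\<forall>s<S. \<exists>U (c :: nat \<Rightarrow> pfile \<Rightarrow> packet).
        U \<subseteq> {..<K} \<and> card U = gain s \<and>
        (\<forall>W. trunc B (tr d s W) = trunc B (xor_sum U (\<lambda>k. c k (W (d k))))) \<and>
        (\<forall>k\<in>U. \<exists>W W'. cache_view B (cache k) W = cache_view B (cache k) W' \<and>
                        trunc B (c k (W (d k))) \<noteq> trunc B (c k (W' (d k)))) \<and>
        (\<forall>k\<in>U. \<forall>k'\<in>U. k' \<noteq> k \<longrightarrow> (\<forall>W W'.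
            cache_view B (cache k) W = cache_view B (cache k) W' \<longrightarrow>
            trunc B (c k' (W (d k'))) = trunc B (c k' (W' (d k')))))))"

end

(* The files are encoded by a Reed-Solomon code of length F and dimension F - Z' over GF(2^B),
   realised inside the algebraic closure of GF(2) as the fixed points of the B-th power of
   the Frobenius map: any F - Z' of the F coded packets determine the file, and fewer determine
   no further coded packet. Coded packet j takes the place of row j of the PDA. User k caches,
   of every file, the coded packets of the Z - Z' useful stars of column k and drops those of
   the useless stars. Transmission s is the XOR of the coded packets at the occurrences of s;
   by condition C3 every other summand sits in a useful star of column k, so user k can cancel
   it. Hence user k learns the coded packets of the F - Z rows where column k has an integer,
   and together with its cache holds F - Z' coded packets of the requested file. *)

theory Submission
  imports Defs "HOL-Algebra.Algebraic_Closure_Type"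
begin

section \<open>Finite fields as fixed points of the Frobenius map\<close>

instance alg_closure :: (field_prime_char) field_prime_char
  by (rule field_prime_charI') simp

lemma CHAR_gf2: "CHAR(gf2) = 2"
proof -
  have "(1::gf2) + 1 = 0" by transfer simp
  then have "CHAR(gf2) dvd 2"
    by (simp flip: of_nat_eq_0_iff_char_dvd)
  then show ?thesis
    using prime_ge_2_nat[OF CHAR_prime[where ?'a = gf2]] by (simp add: dvd_imp_le le_antisym)
qed

definition frobenius_fixed :: "nat \<Rightarrow> 'a :: field_prime_char set" where
  "frobenius_fixed m = {x. x ^ (CHAR('a) ^ m) = x}"

lemma minus_power_CHAR_power: "(- x :: 'a :: field_prime_char) ^ (CHAR('a) ^ m) = - (x ^ (CHAR('a) ^ m))"
proof (induction m)
  case (Suc m)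
  have pow: "y ^ (CHAR('a) ^ Suc m) = (y ^ (CHAR('a) ^ m)) ^ CHAR('a)" for y :: 'a
    by (metis power_Suc2 power_mult)
  show ?case
    unfolding pow Suc.IH by (simp add: minus_power_prime_CHAR)
qed simp

lemma frobenius_fixed_0 [simp]: "0 \<in> frobenius_fixed m"
  and frobenius_fixed_1 [simp]: "1 \<in> frobenius_fixed m"
  by (simp_all add: frobenius_fixed_def)

lemma frobenius_fixed_add [intro]:
  "x \<in> frobenius_fixed m \<Longrightarrow> y \<in> frobenius_fixed m \<Longrightarrow> x + y \<in> frobenius_fixed m"
  by (simp add: frobenius_fixed_def freshmans_dream')

lemma frobenius_fixed_uminus [intro]:
  "x \<in> frobenius_fixed m \<Longrightarrow> - x \<in> frobenius_fixed m"
  by (simp add: frobenius_fixed_def minus_power_CHAR_power)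

lemma frobenius_fixed_diff [intro]:
  "x \<in> frobenius_fixed m \<Longrightarrow> y \<in> frobenius_fixed m \<Longrightarrow> x - y \<in> frobenius_fixed m"
  using frobenius_fixed_add frobenius_fixed_uminus by (metis diff_conv_add_uminus)

lemma frobenius_fixed_mult [intro]:
  "x \<in> frobenius_fixed m \<Longrightarrow> y \<in> frobenius_fixed m \<Longrightarrow> x * y \<in> frobenius_fixed m"
  by (simp add: frobenius_fixed_def power_mult_distrib)

lemma frobenius_fixed_power [intro]:
  "x \<in> frobenius_fixed m \<Longrightarrow> x ^ n \<in> frobenius_fixed m"
  by (induction n) auto

lemma frobenius_fixed_sum [intro]:
  "(\<And>i. i \<in> A \<Longrightarrow> f i \<in> frobenius_fixed m) \<Longrightarrow> sum f A \<in> frobenius_fixed m"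
  by (induction A rule: infinite_finite_induct) auto

lemma frobenius_fixed_prod [intro]:
  "(\<And>i. i \<in> A \<Longrightarrow> f i \<in> frobenius_fixed m) \<Longrightarrow> prod f A \<in> frobenius_fixed m"
  by (induction A rule: infinite_finite_induct) auto

lemma coeff_prod_linear_frobenius_fixed:
  assumes "\<And>i. i \<in> A \<Longrightarrow> a i \<in> frobenius_fixed m"
  shows "coeff (\<Prod>i\<in>A. [:- a i, 1:]) n \<in> frobenius_fixed m"
  using assms
proof (induction A arbitrary: n rule: infinite_finite_induct)
  case (insert i A)
  then show ?case
    by (auto simp: coeff_pCons split: nat.split)
qed auto

lemma card_roots_eq_degree:
  fixes p :: "'a :: alg_closed_field poly"
  assumes "p \<noteq> 0" and "\<And>x. poly p x = 0 \<Longrightarrow> poly (pderiv p) x \<noteq> 0"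
  shows "card {x. poly p x = 0} = degree p"
  using assms
proof (induction "degree p" arbitrary: p)
  case 0
  then obtain c where "p = [:c:]" "c \<noteq> 0"
    by (metis degree_eq_zeroE pCons_0_0)
  then show ?case
    by simp
next
  case (Suc n)
  then obtain x where x: "poly p x = 0"
    using alg_closed_imp_poly_has_root[of p] by auto
  then obtain q where p: "p = [:-x, 1:] * q"
    by (auto simp: poly_eq_0_iff_dvd)
  have "q \<noteq> 0"
    using Suc.prems p by auto
  have deg: "degree p = Suc (degree q)"
    using \<open>q \<noteq> 0\<close> unfolding p by (subst degree_mult_eq) auto
  have pderiv_p: "poly (pderiv p) y = poly q y + (y - x) * poly (pderiv q) y" for y
    unfolding p pderiv_mult by (simp add: pderiv_pCons algebra_simps)
  have "poly q x \<noteq> 0"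
    using Suc.prems(2)[OF x] pderiv_p[of x] by simp
  have roots: "{y. poly p y = 0} = insert x {y. poly q y = 0}"
    by (auto simp: p)
  have "card {y. poly q y = 0} = degree q"
  proof (rule Suc.hyps)
    show "n = degree q"
      using deg Suc.hyps(2) by simp
    show "poly (pderiv q) y \<noteq> 0" if "poly q y = 0" for y
      using Suc.prems(2)[of y] pderiv_p[of y] that by (auto simp: p)
  qed fact
  then show ?case
    unfolding roots deg using \<open>poly q x \<noteq> 0\<close> poly_roots_finite[OF \<open>q \<noteq> 0\<close>] by simp
qed

lemma card_frobenius_fixed:
  assumes "0 < m"
  shows "card (frobenius_fixed m :: 'a :: {alg_closed_field, field_prime_char} set) = CHAR('a) ^ m"
proof -
  define q where "q = CHAR('a) ^ m"
  have "2 \<le> q"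
    using prime_ge_2_nat[OF CHAR_prime[where ?'a = 'a]] self_le_power[of "CHAR('a)" m] assms
    unfolding q_def by linarith
  define p :: "'a poly" where "p = monom 1 q + [:0, -1:]"
  have deg: "degree p = q"
    unfolding p_def using \<open>2 \<le> q\<close> by (subst degree_add_eq_left) (simp_all add: degree_monom_eq)
  have "of_nat q = (0 :: 'a)"
    using assms by (simp add: q_def of_nat_eq_0_iff_char_dvd)
  then have "pderiv p = [:-1:]"
    by (simp add: p_def pderiv_add pderiv_monom pderiv_pCons)
  moreover have "p \<noteq> 0"
    using deg \<open>2 \<le> q\<close> by auto
  ultimately have "card {x. poly p x = 0} = q"
    using card_roots_eq_degree[of p] deg by simp
  moreover have "{x. poly p x = 0} = frobenius_fixed m"
    by (auto simp: p_def poly_monom frobenius_fixed_def q_def)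
  ultimately show ?thesis
    by (simp add: q_def)
qed

section \<open>Reed-Solomon codes on packets\<close>

definition bit_packets :: "nat \<Rightarrow> packet set" where
  "bit_packets B = {p. \<forall>b\<ge>B. \<not> p b}"

lemma card_bit_packets: "card (bit_packets B) = 2 ^ B"
proof -
  have "bij_betw (\<lambda>A b. b \<in> A) (Pow {..<B}) (bit_packets B)"
    by (rule bij_betwI[where g = "\<lambda>p. {b. p b}"]) (auto simp: bit_packets_def not_le[symmetric])
  then have "card (bit_packets B) = card (Pow {..<B})"
    by (simp add: bij_betw_same_card)
  then show ?thesis
    by (simp add: card_Pow)
qed

lemma finite_bit_packets: "finite (bit_packets B)"
  using card_bit_packets[of B] by (metis card_ge_0_finite zero_less_numeral zero_less_power)

lemma trunc_in_bit_packets: "trunc B p \<in> bit_packets B"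
  by (simp add: bit_packets_def trunc_def)

lemma trunc_bit_packet: "p \<in> bit_packets B \<Longrightarrow> trunc B p = p"
  by (auto simp: bit_packets_def trunc_def fun_eq_iff)

(* The last clause is what makes each summand of a transmission genuinely needed by its user. *)
definition mds_code :: "nat \<Rightarrow> nat \<Rightarrow> nat \<Rightarrow> (nat \<Rightarrow> pfile \<Rightarrow> packet) \<Rightarrow> bool" where
  "mds_code F n B v \<longleftrightarrow>
     (\<forall>j w. trunc B (v j w) = v j w) \<and>
     (\<forall>R w w'. R \<subseteq> {..<F} \<longrightarrow> card R = n \<longrightarrow> (\<forall>j\<in>R. v j w = v j w') \<longrightarrow> file_eq n B w w') \<and>
     (\<forall>R j0. R \<subseteq> {..<F} \<longrightarrow> j0 < F \<longrightarrow> j0 \<notin> R \<longrightarrow> card R < n \<longrightarrow>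
        (\<exists>w w'. (\<forall>j\<in>R. v j w = v j w') \<and> v j0 w \<noteq> v j0 w'))"

lemma mds_code_trunc: "mds_code F n B v \<Longrightarrow> trunc B (v j w) = v j w"
  unfolding mds_code_def by blast

lemma mds_code_determines:
  "mds_code F n B v \<Longrightarrow> R \<subseteq> {..<F} \<Longrightarrow> card R = n \<Longrightarrow> \<forall>j\<in>R. v j w = v j w' \<Longrightarrow>
     file_eq n B w w'"
  unfolding mds_code_def by blast

lemma mds_code_separates:
  "mds_code F n B v \<Longrightarrow> R \<subseteq> {..<F} \<Longrightarrow> j0 < F \<Longrightarrow> j0 \<notin> R \<Longrightarrow> card R < n \<Longrightarrow>
     \<exists>w w'. (\<forall>j\<in>R. v j w = v j w') \<and> v j0 w \<noteq> v j0 w'"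
  unfolding mds_code_def by blast

definition rs_eval :: "(nat \<Rightarrow> 'a :: comm_ring_1) \<Rightarrow> nat \<Rightarrow> (nat \<Rightarrow> 'a) \<Rightarrow> nat \<Rightarrow> 'a" where
  "rs_eval \<alpha> n a j = (\<Sum>i<n. a i * \<alpha> j ^ i)"

lemma rs_eval_eq_imp_eq:
  fixes \<alpha> :: "nat \<Rightarrow> 'a :: idom"
  assumes "inj_on \<alpha> R" and "card R = n" and "\<forall>j\<in>R. rs_eval \<alpha> n a j = rs_eval \<alpha> n b j"
    and "i < n"
  shows "a i = b i"
proof -
  define p :: "(nat \<Rightarrow> 'a) \<Rightarrow> 'a poly" where "p c = (\<Sum>i<n. monom (c i) i)" for c
  have poly_p: "poly (p c) (\<alpha> j) = rs_eval \<alpha> n c j" for c j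
    by (simp add: p_def rs_eval_def poly_sum poly_monom)
  have degree_p: "degree (p c) < n" for c
  proof -
    have "degree (p c) \<le> n - 1"
      unfolding p_def by (rule degree_sum_le) (auto intro: order.trans[OF degree_monom_le])
    then show ?thesis
      using \<open>i < n\<close> by linarith
  qed
  have "card (\<alpha> ` R) = n"
    using assms(1,2) by (simp add: card_image)
  then have "p a = p b"
    using assms(3) degree_p by (intro poly_eqI_degree[of "\<alpha> ` R"]) (auto simp: poly_p)
  then have "coeff (p a) i = coeff (p b) i" by simp
  then show ?thesis
    using \<open>i < n\<close> by (simp add: p_def coeff_sum)
qed

lemma rs_eval_coeff_prod_linear:
  fixes \<alpha> :: "nat \<Rightarrow> 'a :: idom"
  assumes "finite A" and "card A < n"
  shows "rs_eval \<alpha> n (coeff (\<Prod>i\<in>A. [:- \<alpha> i, 1:])) j = (\<Prod>i\<in>A. \<alpha> j - \<alpha> i)"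
proof -
  let ?q = "\<Prod>i\<in>A. [:- \<alpha> i, 1:]"
  have "degree ?q = card A"
    by (subst degree_prod_eq_sum_degree) auto
  then have "rs_eval \<alpha> n (coeff ?q) j = (\<Sum>i\<le>degree ?q. coeff ?q i * \<alpha> j ^ i)"
    unfolding rs_eval_def using assms(2) by (intro sum.mono_neutral_right) (auto simp: coeff_eq_0)
  also have "\<dots> = (\<Prod>i\<in>A. \<alpha> j - \<alpha> i)"
    by (simp add: poly_altdef[symmetric] poly_prod)
  finally show ?thesis .
qed

locale rs_packet_code =
  fixes B :: nat and enc :: "'a :: field_prime_char \<Rightarrow> packet" and \<alpha> :: "nat \<Rightarrow> 'a"
  assumes enc: "bij_betw enc (frobenius_fixed B) (bit_packets B)"
    and \<alpha>_in: "\<alpha> j \<in> frobenius_fixed B"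
begin

definition dec :: "packet \<Rightarrow> 'a" where
  "dec p = inv_into (frobenius_fixed B) enc (trunc B p)"

definition code :: "nat \<Rightarrow> nat \<Rightarrow> pfile \<Rightarrow> packet" where
  "code n j w = enc (rs_eval \<alpha> n (\<lambda>i. dec (w i)) j)"

lemma enc_eq_iff: "x \<in> frobenius_fixed B \<Longrightarrow> y \<in> frobenius_fixed B \<Longrightarrow> enc x = enc y \<longleftrightarrow> x = y"
  using enc by (auto simp: bij_betw_def inj_on_eq_iff)

lemma enc_in: "x \<in> frobenius_fixed B \<Longrightarrow> enc x \<in> bit_packets B"
  by (rule bij_betw_apply[OF enc])

lemma dec_in: "dec p \<in> frobenius_fixed B"
  using enc trunc_in_bit_packets by (auto simp: dec_def bij_betw_def intro: inv_into_into)

lemma enc_dec: "enc (dec p) = trunc B p"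
  using enc trunc_in_bit_packets by (auto simp: dec_def bij_betw_def intro: f_inv_into_f)

lemma dec_enc: "x \<in> frobenius_fixed B \<Longrightarrow> dec (enc x) = x"
  using bij_betw_imp_inj_on[OF enc] by (simp add: dec_def trunc_bit_packet enc_in)

lemma rs_eval_dec_in: "rs_eval \<alpha> n (\<lambda>i. dec (w i)) j \<in> frobenius_fixed B"
  unfolding rs_eval_def using dec_in \<alpha>_in by blast

lemma trunc_code: "trunc B (code n j w) = code n j w"
  by (simp add: code_def trunc_bit_packet enc_in rs_eval_dec_in)

lemma code_determines_file:
  assumes "inj_on \<alpha> R" and "card R = n" and "\<forall>j\<in>R. code n j w = code n j w'"
  shows "file_eq n B w w'"
proof -
  have "\<forall>j\<in>R. rs_eval \<alpha> n (\<lambda>i. dec (w i)) j = rs_eval \<alpha> n (\<lambda>i. dec (w' i)) j"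
    using assms(3) by (simp add: code_def enc_eq_iff rs_eval_dec_in)
  then have "trunc B (w i) = trunc B (w' i)" if "i < n" for i
    using rs_eval_eq_imp_eq[OF assms(1,2) _ that] enc_dec by metis
  then show ?thesis
    unfolding file_eq_def trunc_def by metis
qed

lemma code_separates:
  assumes "finite R" and "card R < n" and "j0 \<notin> R" and "inj_on \<alpha> (insert j0 R)"
  shows "\<exists>w w'. (\<forall>j\<in>R. code n j w = code n j w') \<and> code n j0 w \<noteq> code n j0 w'"
proof -
  let ?q = "\<Prod>i\<in>R. [:- \<alpha> i, 1:]"
  define w :: pfile where "w i = enc (coeff ?q i)" for i
  define w' :: pfile where "w' i = enc 0" for i
  have "coeff ?q i \<in> frobenius_fixed B" for i
    using \<alpha>_in by (rule coeff_prod_linear_frobenius_fixed)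
  then have code_w: "code n j w = enc (\<Prod>i\<in>R. \<alpha> j - \<alpha> i)" for j
    using assms(1,2) by (simp add: code_def w_def dec_enc rs_eval_coeff_prod_linear)
  have code_w': "code n j w' = enc 0" for j
    by (simp add: code_def w'_def dec_enc rs_eval_def)
  have "(\<Prod>i\<in>R. \<alpha> j0 - \<alpha> i) \<noteq> 0"
    using assms(1,3,4) by (auto simp: inj_on_def)
  moreover have "(\<Prod>i\<in>R. \<alpha> j0 - \<alpha> i) \<in> frobenius_fixed B"
    using \<alpha>_in by blast
  ultimately have "code n j0 w \<noteq> code n j0 w'"
    by (simp add: code_w code_w' enc_eq_iff)
  moreover have "\<forall>j\<in>R. code n j w = code n j w'"
    using assms(1) by (auto simp: code_w code_w' intro!: arg_cong[where f = enc] prod_zero)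
  ultimately show ?thesis by blast
qed

lemma mds_code:
  assumes "inj_on \<alpha> {..<F}"
  shows "mds_code F n B (code n)"
  unfolding mds_code_def
proof (intro conjI allI impI)
  show "trunc B (code n j w) = code n j w" for j w
    by (rule trunc_code)
  show "file_eq n B w w'"
    if "R \<subseteq> {..<F}" "card R = n" "\<forall>j\<in>R. code n j w = code n j w'" for R w w'
    using that assms by (intro code_determines_file) (auto intro: inj_on_subset)
  show "\<exists>w w'. (\<forall>j\<in>R. code n j w = code n j w') \<and> code n j0 w \<noteq> code n j0 w'"
    if "R \<subseteq> {..<F}" "j0 < F" "j0 \<notin> R" "card R < n" for R j0
    using that inj_on_subset[OF assms, of "insert j0 R"] by (intro code_separates) (auto intro: finite_subset)
qed

end

lemma mds_code_exists: "\<exists>B>0. \<exists>v. mds_code F n B v"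
proof -
  \<comment> \<open>any B > 0 with F \<le> 2 ^ B, so that GF(2^B) has F distinct evaluation points\<close>
  define B where "B = Suc F"
  let ?E = "frobenius_fixed B :: gf2 alg_closure set"
  have card_E: "card ?E = 2 ^ B"
    by (simp add: B_def card_frobenius_fixed CHAR_gf2)
  then have "finite ?E"
    by (metis card_ge_0_finite zero_less_numeral zero_less_power)
  obtain enc where enc: "bij_betw enc ?E (bit_packets B)"
    using finite_same_card_bij[OF \<open>finite ?E\<close> finite_bit_packets] card_E card_bit_packets by metis
  have "F \<le> 2 ^ B"
    unfolding B_def using less_exp[of "Suc F"] by linarith
  then have "card {..<F} \<le> card ?E"
    using card_E by simp
  then obtain \<alpha>0 where \<alpha>0: "\<alpha>0 ` {..<F} \<subseteq> ?E" "inj_on \<alpha>0 {..<F}"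
    using card_le_inj[OF _ \<open>finite ?E\<close>] by blast
  define \<alpha> where "\<alpha> j = (if j < F then \<alpha>0 j else 0)" for j
  interpret rs_packet_code B enc \<alpha>
    using enc \<alpha>0(1) by unfold_locales (auto simp: \<alpha>_def)
  have "inj_on \<alpha> {..<F}"
    using \<alpha>0(2) by (auto simp: \<alpha>_def inj_on_def)
  then show ?thesis
    using mds_code by (auto simp: B_def)
qed

section \<open>Placement delivery arrays\<close>

locale PDA =
  fixes K F Z S :: nat and P :: "nat \<Rightarrow> nat \<Rightarrow> nat option"
  assumes PDA: "is_PDA K F Z S P"
begin

lemma entry_less: "j < F \<Longrightarrow> k < K \<Longrightarrow> P j k = Some s \<Longrightarrow> s < S"
  using PDA unfolding is_PDA_def by blast

lemma card_stars: "k < K \<Longrightarrow> card {j. j < F \<and> P j k = None} = Z"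
  using PDA unfolding is_PDA_def by blast

lemma entry_occurs: "s < S \<Longrightarrow> \<exists>j<F. \<exists>k<K. P j k = Some s"
  using PDA unfolding is_PDA_def by blast

lemma repeated_entry:
  assumes "j1 < F" "k1 < K" "j2 < F" "k2 < K" "(j1, k1) \<noteq> (j2, k2)"
    and "P j1 k1 = Some s" "P j2 k2 = Some s"
  shows "j1 \<noteq> j2 \<and> k1 \<noteq> k2 \<and> P j1 k2 = None \<and> P j2 k1 = None"
  using PDA assms unfolding is_PDA_def by blast

definition useful_stars :: "nat \<Rightarrow> nat set" where
  "useful_stars k = {j. j < F \<and> useful_star K F S P j k}"

definition useless_stars :: "nat \<Rightarrow> nat set" where
  "useless_stars k = {j. j < F \<and> useless_star K F S P j k}"

definition entry_rows :: "nat \<Rightarrow> nat set" where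
  "entry_rows k = {j. j < F \<and> P j k \<noteq> None}"

definition users :: "nat \<Rightarrow> nat set" where
  "users s = {k. k < K \<and> (\<exists>j<F. P j k = Some s)}"

(* unique by C3; unspecified if s does not occur in column k *)
definition row :: "nat \<Rightarrow> nat \<Rightarrow> nat" where
  "row s k = (THE j. j < F \<and> P j k = Some s)"

lemma row_eq: "j < F \<Longrightarrow> k < K \<Longrightarrow> P j k = Some s \<Longrightarrow> row s k = j"
  unfolding row_def by (rule the_equality) (use repeated_entry in blast)+

lemma row_users: "k \<in> users s \<Longrightarrow> row s k < F \<and> P (row s k) k = Some s"
  unfolding users_def using row_eq by auto

lemma finite_users: "finite (users s)"
  by (simp add: users_def)

lemma card_users: "card (users s) = occurrences K F P s"
proof -
  have "{(j, k). j < F \<and> k < K \<and> P j k = Some s} = (\<lambda>k. (row s k, k)) ` users s"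
    by (auto simp: users_def row_eq image_iff)
  moreover have "inj_on (\<lambda>k. (row s k, k)) (users s)"
    by (auto simp: inj_on_def)
  ultimately show ?thesis
    by (simp add: occurrences_def card_image)
qed

lemma row_in_useful_stars:
  assumes "k \<in> users s" "k' \<in> users s" "k' \<noteq> k"
  shows "row s k' \<in> useful_stars k"
proof -
  have k: "k < K" "row s k < F" "P (row s k) k = Some s"
    and k': "k' < K" "row s k' < F" "P (row s k') k' = Some s"
    using assms(1,2) row_users by (auto simp: users_def)
  have "P (row s k') k = None"
    using repeated_entry[OF k'(2,1) k(2,1) _ k'(3) k(3)] assms(3) by auto
  moreover have "s < S"
    using entry_less k by blast
  ultimately show ?thesis
    using k k' by (auto simp: useful_stars_def useful_star_def)
qed

lemma row_notin_useful_stars: "k \<in> users s \<Longrightarrow> row s k \<notin> useful_stars k"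
  using row_users by (auto simp: useful_stars_def useful_star_def)

lemma card_useful_stars_useless_stars:
  assumes "k < K"
  shows "card (useful_stars k) + card (useless_stars k) = Z"
proof -
  have "{j. j < F \<and> P j k = None} = useful_stars k \<union> useless_stars k"
    by (auto simp: useful_stars_def useless_stars_def useless_star_def useful_star_def)
  moreover have "useful_stars k \<inter> useless_stars k = {}"
    by (auto simp: useful_stars_def useless_stars_def useless_star_def)
  ultimately show ?thesis
    using card_stars[OF assms]
    by (simp add: card_Un_disjoint useful_stars_def useless_stars_def)
qed

lemma card_entry_rows:
  assumes "k < K"
  shows "card (entry_rows k) = F - Z"
proof -
  have "entry_rows k = {..<F} - {j. j < F \<and> P j k = None}"
    by (auto simp: entry_rows_def)
  moreover have "{j. j < F \<and> P j k = None} \<subseteq> {..<F}"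
    by auto
  ultimately show ?thesis
    using card_stars[OF assms] by (metis card_Diff_subset card_lessThan finite_subset finite_lessThan)
qed

lemma card_useful_stars_Un_entry_rows:
  assumes "k < K"
  shows "card (useful_stars k \<union> entry_rows k) = card (useful_stars k) + (F - Z)"
proof -
  have "useful_stars k \<inter> entry_rows k = {}"
    by (auto simp: useful_stars_def entry_rows_def useful_star_def)
  then show ?thesis
    using card_entry_rows[OF assms]
    by (simp add: card_Un_disjoint useful_stars_def entry_rows_def)
qed

lemma Z_less_F:
  assumes "0 < S"
  shows "Z < F"
proof -
  obtain j k where jk: "j < F" "k < K" "P j k = Some 0"
    using entry_occurs[OF assms] by blast
  have "{j. j < F \<and> P j k = None} \<subseteq> {..<F} - {j}"
    using jk by auto
  then have "Z \<le> F - 1"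
    using card_stars[OF jk(2)] card_mono[of "{..<F} - {j}"] jk(1) by fastforce
  then show ?thesis
    using jk(1) by linarith
qed

end

section \<open>The coded caching scheme\<close>

lemma trunc_eq_iff: "trunc B p = trunc B q \<longleftrightarrow> (\<forall>b<B. p b = q b)"
  by (auto simp: trunc_def fun_eq_iff)

lemma xor_sum_insert:
  assumes "finite U" and "k \<notin> U"
  shows "xor_sum (insert k U) f b \<longleftrightarrow> f k b \<noteq> xor_sum U f b"
proof (cases "f k b")
  case True
  then have "{k' \<in> insert k U. f k' b} = insert k {k' \<in> U. f k' b}" by auto
  then show ?thesis
    using assms True by (simp add: xor_sum_def)
next
  case False
  then have "{k' \<in> insert k U. f k' b} = {k' \<in> U. f k' b}" by auto
  then show ?thesis
    using False by (simp add: xor_sum_def)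
qed

lemma trunc_xor_sum_cancel:
  assumes "finite U" and "k \<in> U"
    and "\<And>k'. k' \<in> U \<Longrightarrow> k' \<noteq> k \<Longrightarrow> trunc B (f k') = trunc B (g k')"
    and "trunc B (xor_sum U f) = trunc B (xor_sum U g)"
  shows "trunc B (f k) = trunc B (g k)"
  unfolding trunc_eq_iff
proof (intro allI impI)
  fix b assume "b < B"
  have U: "U = insert k (U - {k})"
    using assms(2) by blast
  have insert_k: "xor_sum U h b \<longleftrightarrow> h k b \<noteq> xor_sum (U - {k}) h b" for h
    using xor_sum_insert[of "U - {k}" k h b] assms(1) U by simp
  have "{k' \<in> U - {k}. f k' b} = {k' \<in> U - {k}. g k' b}"
    using assms(3) \<open>b < B\<close> by (auto simp: trunc_eq_iff)
  then have "xor_sum (U - {k}) f b = xor_sum (U - {k}) g b"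
    by (simp add: xor_sum_def)
  moreover have "xor_sum U f b = xor_sum U g b"
    using assms(4) \<open>b < B\<close> by (simp add: trunc_eq_iff)
  ultimately show "f k b = g k b"
    using insert_k[of f] insert_k[of g] by blast
qed

locale PDA_coded_caching = PDA +
  fixes Z' N B :: nat and v :: "nat \<Rightarrow> pfile \<Rightarrow> packet"
  assumes card_useless_stars: "k < K \<Longrightarrow> card (useless_stars k) = Z'"
    and S_pos: "0 < S"
    and B_pos: "0 < B"
    and mds: "mds_code F (F - Z') B v"
begin

definition cache :: "nat \<Rightarrow> cache_item list" where
  "cache k = [(n, v j). n \<leftarrow> [0..<N], j \<leftarrow> sorted_list_of_set (useful_stars k)]"

definition delivery :: "(nat \<Rightarrow> nat) \<Rightarrow> nat \<Rightarrow> library \<Rightarrow> packet" where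
  "delivery d s W = xor_sum (users s) (\<lambda>k. v (row s k) (W (d k)))"

lemma trunc_v: "trunc B (v j w) = v j w"
  using mds by (rule mds_code_trunc)

lemma finite_useful_stars: "finite (useful_stars k)"
  by (simp add: useful_stars_def)

lemma Z'_le_Z: "Z' \<le> Z"
proof -
  obtain k where "k < K"
    using entry_occurs[OF S_pos] by blast
  then show ?thesis
    using card_useful_stars_useless_stars card_useless_stars by fastforce
qed

lemma Z'_less_F: "Z' < F"
  using Z'_le_Z Z_less_F[OF S_pos] by simp

lemma set_cache: "set (cache k) = {(n, v j) | n j. n < N \<and> j \<in> useful_stars k}"
  by (auto simp: cache_def finite_useful_stars)

lemma length_cache: "length (cache k) = N * card (useful_stars k)"
  by (simp add: cache_def length_concat comp_def sum_list_triv)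

lemma cache_view_eq_iff:
  "cache_view B (cache k) W = cache_view B (cache k) W' \<longleftrightarrow>
     (\<forall>n<N. \<forall>j\<in>useful_stars k. v j (W n) = v j (W' n))"
  unfolding cache_view_def map_eq_conv set_cache by (auto simp: trunc_v) (metis trunc_v)

lemma card_useful_stars: "k < K \<Longrightarrow> card (useful_stars k) = Z - Z'"
  using card_useful_stars_useless_stars card_useless_stars by fastforce

lemma card_decoding_rows: "k < K \<Longrightarrow> card (useful_stars k \<union> entry_rows k) = F - Z'"
  using card_useful_stars_Un_entry_rows card_useful_stars Z'_le_Z Z_less_F[OF S_pos] by simp

lemma other_user_packet_cached:
  assumes "k \<in> users s" "k' \<in> users s" "k' \<noteq> k" "n < N"
    and "cache_view B (cache k) W = cache_view B (cache k) W'"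
  shows "v (row s k') (W n) = v (row s k') (W' n)"
  using assms row_in_useful_stars by (simp add: cache_view_eq_iff)

lemma demanded_file_recoverable:
  assumes "valid_demand K N d" "k < K"
    and cache_eq: "cache_view B (cache k) W = cache_view B (cache k) W'"
    and signal_eq: "signal_view B S (delivery d) W = signal_view B S (delivery d) W'"
  shows "file_eq (F - Z') B (W (d k)) (W' (d k))"
proof -
  have "d k < N"
    using assms(1,2) by (simp add: valid_demand_def)
  have decoded: "v j (W (d k)) = v j (W' (d k))" if j: "j \<in> useful_stars k \<union> entry_rows k" for j
  proof (cases "j \<in> useful_stars k")
    case True
    then show ?thesis
      using cache_eq \<open>d k < N\<close> by (simp add: cache_view_eq_iff)
  next
    case False
    then obtain s where j: "j < F" "P j k = Some s"
      using j by (auto simp: entry_rows_def)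
    then have "s < S" "k \<in> users s" "row s k = j"
      using entry_less row_eq \<open>k < K\<close> by (auto simp: users_def)
    have "trunc B (delivery d s W) = trunc B (delivery d s W')"
      using signal_eq \<open>s < S\<close> by (simp add: signal_view_def)
    moreover have "trunc B (v (row s k') (W (d k'))) = trunc B (v (row s k') (W' (d k')))"
      if "k' \<in> users s" "k' \<noteq> k" for k'
      using other_user_packet_cached[OF \<open>k \<in> users s\<close> that _ cache_eq] that assms(1)
      by (simp add: users_def valid_demand_def)
    ultimately have "trunc B (v (row s k) (W (d k))) = trunc B (v (row s k) (W' (d k)))"
      unfolding delivery_def
      by (rule trunc_xor_sum_cancel[OF finite_users \<open>k \<in> users s\<close>, rotated])
    then show ?thesis
      using \<open>row s k = j\<close> by (simp add: trunc_v)
  qed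
  have "useful_stars k \<union> entry_rows k \<subseteq> {..<F}"
    by (auto simp: useful_stars_def entry_rows_def)
  with decoded show ?thesis
    using mds_code_determines[OF mds _ card_decoding_rows[OF \<open>k < K\<close>]] by blast
qed

lemma demanded_packet_not_cached:
  assumes "k \<in> users s"
  shows "\<exists>W W'. cache_view B (cache k) W = cache_view B (cache k) W' \<and>
    v (row s k) (W (d k)) \<noteq> v (row s k) (W' (d k))"
proof -
  have "k < K"
    using assms by (simp add: users_def)
  then have "card (useful_stars k) < F - Z'"
    using card_useful_stars Z'_le_Z Z_less_F[OF S_pos] by simp
  moreover have "useful_stars k \<subseteq> {..<F}"
    by (auto simp: useful_stars_def)
  ultimately obtain w w' where
    ww: "\<forall>j\<in>useful_stars k. v j w = v j w'" "v (row s k) w \<noteq> v (row s k) w'"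
    using mds_code_separates[OF mds] row_users[OF assms] row_notin_useful_stars[OF assms] by blast
  define W :: library where "W n = w" for n
  define W' :: library where "W' n = (if n = d k then w' else w)" for n
  have "cache_view B (cache k) W = cache_view B (cache k) W'"
    using ww(1) by (simp add: cache_view_eq_iff W_def W'_def)
  moreover have "v (row s k) (W (d k)) \<noteq> v (row s k) (W' (d k))"
    using ww(2) by (simp add: W_def W'_def)
  ultimately show ?thesis by blast
qed

lemma coded_caching_scheme:
  "coded_caching_scheme K (real N * ((real Z - real Z') / (real F - real Z'))) N (F - Z') B S
     cache delivery"
proof -
  have "real (length (cache k)) = real N * (real Z - real Z')" if "k < K" for k
    using that Z'_le_Z by (simp add: length_cache card_useful_stars)
  moreover have "real F - real Z' > 0"
    using Z'_less_F by simp
  ultimately show ?thesis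
    unfolding coded_caching_scheme_def
    using Z'_less_F B_pos demanded_file_recoverable by (auto simp: set_cache)
qed

lemma xor_delivery: "xor_delivery K N B S cache delivery (occurrences K F P)"
  unfolding xor_delivery_def
proof (intro allI impI)
  fix d s assume d: "valid_demand K N d"
  show "\<exists>U c. U \<subseteq> {..<K} \<and> card U = occurrences K F P s \<and>
      (\<forall>W. trunc B (delivery d s W) = trunc B (xor_sum U (\<lambda>k. c k (W (d k))))) \<and>
      (\<forall>k\<in>U. \<exists>W W'. cache_view B (cache k) W = cache_view B (cache k) W' \<and>
                      trunc B (c k (W (d k))) \<noteq> trunc B (c k (W' (d k)))) \<and>
      (\<forall>k\<in>U. \<forall>k'\<in>U. k' \<noteq> k \<longrightarrow> (\<forall>W W'.
          cache_view B (cache k) W = cache_view B (cache k) W' \<longrightarrow>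
          trunc B (c k' (W (d k'))) = trunc B (c k' (W' (d k')))))"
  proof (intro exI conjI)
    show "users s \<subseteq> {..<K}"
      by (auto simp: users_def)
    show "card (users s) = occurrences K F P s"
      by (rule card_users)
    show "\<forall>W. trunc B (delivery d s W) = trunc B (xor_sum (users s) (\<lambda>k. v (row s k) (W (d k))))"
      by (simp add: delivery_def)
    show "\<forall>k\<in>users s. \<exists>W W'. cache_view B (cache k) W = cache_view B (cache k) W' \<and>
        trunc B (v (row s k) (W (d k))) \<noteq> trunc B (v (row s k) (W' (d k)))"
      using demanded_packet_not_cached by (simp add: trunc_v)
    show "\<forall>k\<in>users s. \<forall>k'\<in>users s. k' \<noteq> k \<longrightarrow> (\<forall>W W'.
        cache_view B (cache k) W = cache_view B (cache k) W' \<longrightarrow>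
        trunc B (v (row s k') (W (d k'))) = trunc B (v (row s k') (W' (d k'))))"
    proof (intro ballI impI allI)
      fix k k' W W'
      assume k: "k \<in> users s" and k': "k' \<in> users s" "k' \<noteq> k"
        and cache_eq: "cache_view B (cache k) W = cache_view B (cache k) W'"
      have "d k' < N"
        using k'(1) d by (simp add: users_def valid_demand_def)
      then show "trunc B (v (row s k') (W (d k'))) = trunc B (v (row s k') (W' (d k')))"
        using other_user_packet_cached[OF k k' _ cache_eq] by simp
    qed
  qed
qed

end

theorem theorem2:
  fixes K F Z S Z' N :: nat and P :: "nat \<Rightarrow> nat \<Rightarrow> nat option"
  assumes "0 < K" and "0 < F" and "0 < Z" and "0 < S"
    and "is_PDA K F Z S P"
    and "\<forall>k<K. card {j. j < F \<and> useless_star K F S P j k} = Z'"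
  shows "\<exists>M B cache tr.
           M = real N * ((real Z - real Z') / (real F - real Z')) \<and>
           coded_caching_scheme K M N (F - Z') B S cache tr \<and>
           transmission_rate (F - Z') S = real S / (real F - real Z') \<and>
           xor_delivery K N B S cache tr (occurrences K F P)"
proof -
  obtain B v where "0 < B" "mds_code F (F - Z') B v"
    using mds_code_exists by blast
  interpret PDA K F Z S P
    using assms(5) by unfold_locales
  interpret PDA_coded_caching K F Z S P Z' N B v
    using assms(4-6) \<open>0 < B\<close> \<open>mds_code F (F - Z') B v\<close> by unfold_locales (simp_all add: useless_stars_def)
  have "transmission_rate (F - Z') S = real S / (real F - real Z')"
    using Z'_less_F by (simp add: transmission_rate_def)
  then show ?thesis
    using coded_caching_scheme xor_delivery by blast
qed

end
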